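(* There exist constants $\kappa_{16},\kappa_{18}>0$, depending only on $N,\gamma,\beta$, such that for any $y\in\mathbb R^N$ and any $R>0$, $$\kappa_{16}^{-1}\rho^{\gamma,\beta}_y(R)\le R^2\frac{\mu_\gamma(B_R(y))}{\mu_\beta(B_R(y))}\le\kappa_{16}\rho^{\gamma,\beta}_y(R)$$ and $$\kappa_{18}^{-1}R^2[R\vee|y|]^{\beta-\gamma}\le\rho^{\gamma,\beta}_y(R)\le\kappa_{18}R^2[R\vee|y|]^{\beta-\gamma}.$$
   Context: $N\ge3$ and $\gamma,\beta\in\mathbb R$ satisfy $\gamma<N$ and $\gamma-2<\beta\le\frac{N-2}{N}\gamma$. For $\alpha\in\mathbb R$ and measurable $E$, $\mu_\alpha(E)=\int_E|x|^{-\alpha}dx$. $\rho^{\gamma,\beta}_y(R)=\big(\int_{B_R(y)}|x|^{(\beta-\gamma)N/2}dx\big)^{2/N}$. $a\vee b=\max\{a,b\}$. *)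

theory Defs
  imports "HOL-Analysis.Analysis"
begin

definition mu_w :: "real \<Rightarrow> (real ^ 'n) set \<Rightarrow> real" where
  "mu_w \<alpha> E = (LINT x : E | lborel. norm x powr (- \<alpha>))"

definition rho_w :: "real \<Rightarrow> real \<Rightarrow> real ^ 'n \<Rightarrow> real \<Rightarrow> real" where
  "rho_w \<gamma> \<beta> y R =
     (LINT x : ball y R | lborel. norm x powr ((\<beta> - \<gamma>) * real CARD('n) / 2))
       powr (2 / real CARD('n))"

end

theory Submission
  imports Defs
begin

text \<open>
  For \<open>a > -N\<close> the integral of \<open>|x|^a\<close> over \<open>B_R(y)\<close> is comparable to \<open>R^N (R \<or> |y|)^a\<close>,
  uniformly in \<open>y\<close> and \<open>R\<close>. From below: outside \<open>B_{R/4}(0)\<close> the ball keeps a fixed fraction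
  of its volume and there \<open>|x|\<close> is comparable to \<open>R \<or> |y|\<close>. From above: either \<open>|x|\<close> is
  comparable to \<open>|y|\<close> on the whole ball (when \<open>|y| \<ge> 2R\<close>), or \<open>B_R(y) \<subseteq> B_{3R}(0)\<close>, where
  dyadic shells give a convergent geometric series. The measures \<open>\<mu>\<^sub>\<gamma>\<close>, \<open>\<mu>\<^sub>\<beta>\<close> and the integral
  defining \<open>\<rho>\<close> are of this form (exponents \<open>-\<gamma>\<close>, \<open>-\<beta>\<close>, \<open>(\<beta>-\<gamma>)N/2\<close>, all \<open>> -N\<close>; the upper
  bound on \<open>\<beta>\<close> is only needed for \<open>\<beta> < N\<close>), and two-sided bounds are stable under products,
  quotients and powers.
\<close>

definition comparable_on :: "'a set \<Rightarrow> ('a \<Rightarrow> real) \<Rightarrow> ('a \<Rightarrow> real) \<Rightarrow> bool" where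
  "comparable_on S f g \<longleftrightarrow> (\<exists>c>0. \<exists>C>0. \<forall>x\<in>S. c * g x \<le> f x \<and> f x \<le> C * g x)"

lemma comparable_onI:
  assumes "c > 0" "C > 0" "\<And>x. x \<in> S \<Longrightarrow> c * g x \<le> f x" "\<And>x. x \<in> S \<Longrightarrow> f x \<le> C * g x"
  shows "comparable_on S f g"
  using assms unfolding comparable_on_def by blast

lemma comparable_onE:
  assumes "comparable_on S f g"
  obtains c C where "c > 0" "C > 0" "\<And>x. x \<in> S \<Longrightarrow> c * g x \<le> f x" "\<And>x. x \<in> S \<Longrightarrow> f x \<le> C * g x"
  using assms that unfolding comparable_on_def by blast

lemma comparable_on_refl: "comparable_on S f f"
  by (rule comparable_onI[of 1 1]) auto

lemma comparable_on_sym: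
  assumes "comparable_on S f g"
  shows "comparable_on S g f"
proof -
  obtain c C where cC: "c > 0" "C > 0" "\<And>x. x \<in> S \<Longrightarrow> c * g x \<le> f x" "\<And>x. x \<in> S \<Longrightarrow> f x \<le> C * g x"
    using assms by (rule comparable_onE) blast
  show ?thesis
  proof (rule comparable_onI[of "1 / C" "1 / c"])
    show "1 / C * f x \<le> g x" if "x \<in> S" for x
      using cC(2) cC(4)[OF that] by (simp add: divide_le_eq mult.commute)
    show "g x \<le> 1 / c * f x" if "x \<in> S" for x
      using cC(1) cC(3)[OF that] by (simp add: le_divide_eq mult.commute)
  qed (use cC in auto)
qed

lemma comparable_on_trans:
  assumes "comparable_on S f g" "comparable_on S g h"
  shows "comparable_on S f h"
proof -
  obtain c C where cC: "c > 0" "C > 0" "\<And>x. x \<in> S \<Longrightarrow> c * g x \<le> f x" "\<And>x. x \<in> S \<Longrightarrow> f x \<le> C * g x"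
    using assms(1) by (rule comparable_onE) blast
  obtain d D where dD: "d > 0" "D > 0" "\<And>x. x \<in> S \<Longrightarrow> d * h x \<le> g x" "\<And>x. x \<in> S \<Longrightarrow> g x \<le> D * h x"
    using assms(2) by (rule comparable_onE) blast
  show ?thesis
  proof (rule comparable_onI[of "c * d" "C * D"])
    fix x assume x: "x \<in> S"
    have "c * d * h x = c * (d * h x)" by simp
    also have "\<dots> \<le> c * g x" using cC(1) dD(3)[OF x] by simp
    also have "\<dots> \<le> f x" using cC(3)[OF x] .
    finally show "c * d * h x \<le> f x" .
    have "f x \<le> C * g x" using cC(4)[OF x] .
    also have "\<dots> \<le> C * (D * h x)" using cC(2) dD(4)[OF x] by simp
    finally show "f x \<le> C * D * h x" by (simp add: mult.assoc)
  qed (use cC dD in auto)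
qed

lemma comparable_on_cong:
  assumes "comparable_on S f g" "\<And>x. x \<in> S \<Longrightarrow> f x = f' x" "\<And>x. x \<in> S \<Longrightarrow> g x = g' x"
  shows "comparable_on S f' g'"
  using assms unfolding comparable_on_def by auto

lemma comparable_on_mult:
  assumes "comparable_on S f1 g1" "comparable_on S f2 g2"
    and "\<And>x. x \<in> S \<Longrightarrow> 0 \<le> g1 x" "\<And>x. x \<in> S \<Longrightarrow> 0 \<le> g2 x"
  shows "comparable_on S (\<lambda>x. f1 x * f2 x) (\<lambda>x. g1 x * g2 x)"
proof -
  obtain c1 C1 where 1: "c1 > 0" "C1 > 0" "\<And>x. x \<in> S \<Longrightarrow> c1 * g1 x \<le> f1 x" "\<And>x. x \<in> S \<Longrightarrow> f1 x \<le> C1 * g1 x"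
    using assms(1) by (rule comparable_onE) blast
  obtain c2 C2 where 2: "c2 > 0" "C2 > 0" "\<And>x. x \<in> S \<Longrightarrow> c2 * g2 x \<le> f2 x" "\<And>x. x \<in> S \<Longrightarrow> f2 x \<le> C2 * g2 x"
    using assms(2) by (rule comparable_onE) blast
  show ?thesis
  proof (rule comparable_onI[of "c1 * c2" "C1 * C2"])
    fix x assume x: "x \<in> S"
    have nonneg: "0 \<le> c1 * g1 x" "0 \<le> c2 * g2 x"
      using 1(1) 2(1) assms(3,4)[OF x] by simp_all
    have "c1 * c2 * (g1 x * g2 x) = (c1 * g1 x) * (c2 * g2 x)" by (simp add: ac_simps)
    also have "\<dots> \<le> f1 x * f2 x"
      using 1(3)[OF x] 2(3)[OF x] nonneg by (intro mult_mono) auto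
    finally show "c1 * c2 * (g1 x * g2 x) \<le> f1 x * f2 x" .
    have "f1 x * f2 x \<le> (C1 * g1 x) * (C2 * g2 x)"
      using 1(4)[OF x] 2(4)[OF x] nonneg 1(3)[OF x] 2(3)[OF x] 1(2) assms(3)[OF x]
      by (intro mult_mono) auto
    also have "\<dots> = C1 * C2 * (g1 x * g2 x)" by (simp add: ac_simps)
    finally show "f1 x * f2 x \<le> C1 * C2 * (g1 x * g2 x)" .
  qed (use 1 2 in auto)
qed

lemma comparable_on_inverse:
  assumes "comparable_on S f g" "\<And>x. x \<in> S \<Longrightarrow> 0 < g x"
  shows "comparable_on S (\<lambda>x. inverse (f x)) (\<lambda>x. inverse (g x))"
proof -
  obtain c C where cC: "c > 0" "C > 0" "\<And>x. x \<in> S \<Longrightarrow> c * g x \<le> f x" "\<And>x. x \<in> S \<Longrightarrow> f x \<le> C * g x"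
    using assms(1) by (rule comparable_onE) blast
  show ?thesis
  proof (rule comparable_onI[of "inverse C" "inverse c"])
    fix x assume x: "x \<in> S"
    have pos: "0 < c * g x" using cC(1) assms(2)[OF x] by simp
    show "inverse C * inverse (g x) \<le> inverse (f x)"
      using le_imp_inverse_le[OF cC(4)[OF x]] pos cC(3)[OF x] by (simp add: mult.commute)
    show "inverse (f x) \<le> inverse c * inverse (g x)"
      using le_imp_inverse_le[OF cC(3)[OF x] pos] by (simp add: mult.commute)
  qed (use cC in auto)
qed

lemma comparable_on_divide:
  assumes "comparable_on S f1 g1" "comparable_on S f2 g2"
    and "\<And>x. x \<in> S \<Longrightarrow> 0 \<le> g1 x" "\<And>x. x \<in> S \<Longrightarrow> 0 < g2 x"
  shows "comparable_on S (\<lambda>x. f1 x / f2 x) (\<lambda>x. g1 x / g2 x)"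
  using comparable_on_mult[OF assms(1) comparable_on_inverse[OF assms(2,4)]] assms(3,4)
  by (simp add: divide_inverse less_imp_le)

lemma comparable_on_powr:
  assumes "comparable_on S f g" "\<And>x. x \<in> S \<Longrightarrow> 0 \<le> g x" "0 \<le> e"
  shows "comparable_on S (\<lambda>x. f x powr e) (\<lambda>x. g x powr e)"
proof -
  obtain c C where cC: "c > 0" "C > 0" "\<And>x. x \<in> S \<Longrightarrow> c * g x \<le> f x" "\<And>x. x \<in> S \<Longrightarrow> f x \<le> C * g x"
    using assms(1) by (rule comparable_onE) blast
  show ?thesis
  proof (rule comparable_onI[of "c powr e" "C powr e"])
    fix x assume x: "x \<in> S"
    have nonneg: "0 \<le> c * g x" using cC(1) assms(2)[OF x] by simp
    show "c powr e * g x powr e \<le> f x powr e"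
      using powr_mono2[OF assms(3) nonneg cC(3)[OF x]] cC(1) assms(2)[OF x] by (simp add: powr_mult)
    show "f x powr e \<le> C powr e * g x powr e"
      using powr_mono2[OF assms(3) order_trans[OF nonneg cC(3)[OF x]] cC(4)[OF x]] cC(2) assms(2)[OF x]
      by (simp add: powr_mult)
  qed (use cC in auto)
qed

lemma comparable_on_symmetric_constantE:
  assumes "comparable_on S f g" "\<And>x. x \<in> S \<Longrightarrow> 0 \<le> f x"
  obtains \<kappa> where "\<kappa> > 0" "\<And>x. x \<in> S \<Longrightarrow> f x / \<kappa> \<le> g x" "\<And>x. x \<in> S \<Longrightarrow> g x \<le> \<kappa> * f x"
proof -
  obtain c C where cC: "c > 0" "C > 0" "\<And>x. x \<in> S \<Longrightarrow> c * f x \<le> g x" "\<And>x. x \<in> S \<Longrightarrow> g x \<le> C * f x"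
    using comparable_on_sym[OF assms(1)] by (rule comparable_onE) blast
  define \<kappa> where "\<kappa> = max C (inverse c)"
  have \<kappa>: "\<kappa> > 0" "C \<le> \<kappa>" "inverse c \<le> \<kappa>" using cC(2) by (auto simp: \<kappa>_def)
  show ?thesis
  proof (rule that[OF \<kappa>(1)])
    fix x assume x: "x \<in> S"
    have "f x / \<kappa> \<le> f x / inverse c"
      using \<kappa> cC(1) assms(2)[OF x] by (intro divide_left_mono) auto
    also have "\<dots> = c * f x" by (simp add: divide_inverse mult.commute)
    finally show "f x / \<kappa> \<le> g x" using cC(3)[OF x] by linarith
    show "g x \<le> \<kappa> * f x"
      using cC(4)[OF x] mult_right_mono[OF \<kappa>(2) assms(2)[OF x]] by linarith
  qed
qed

lemma comparable_on_pairs_symmetric_constant: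
  assumes "comparable_on (UNIV \<times> {0<..}) (\<lambda>(y, R). f y R) (\<lambda>(y, R). g y R)"
    and "\<And>y R. 0 < R \<Longrightarrow> 0 \<le> f y R"
  shows "\<exists>\<kappa>>0. \<forall>y R. R > 0 \<longrightarrow> f y R / \<kappa> \<le> g y R \<and> g y R \<le> \<kappa> * f y R"
proof -
  obtain \<kappa> where "\<kappa> > 0"
    and "\<And>x. x \<in> UNIV \<times> {0<..} \<Longrightarrow> (\<lambda>(y, R). f y R) x / \<kappa> \<le> (\<lambda>(y, R). g y R) x"
    and "\<And>x. x \<in> UNIV \<times> {0<..} \<Longrightarrow> (\<lambda>(y, R). g y R) x \<le> \<kappa> * (\<lambda>(y, R). f y R) x"
    using assms(1) by (rule comparable_on_symmetric_constantE) (use assms(2) in auto)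
  then show ?thesis by (intro exI[of _ \<kappa>]) force
qed

lemma ennreal_le_suminf: "(f k :: ennreal) \<le> (\<Sum>k. f k)"
  using sum_le_suminf[of f "{k}"] by simp

lemma set_nn_integral_le_const:
  assumes "A \<in> sets M" "\<And>x. x \<in> A \<Longrightarrow> f x \<le> u"
  shows "(\<integral>\<^sup>+x\<in>A. f x \<partial>M) \<le> u * emeasure M A"
proof -
  have "(\<integral>\<^sup>+x\<in>A. f x \<partial>M) \<le> (\<integral>\<^sup>+x. u * indicator A x \<partial>M)"
    by (intro nn_integral_mono) (auto simp: assms(2) split: split_indicator)
  also have "\<dots> = u * emeasure M A"
    using assms(1) by (rule nn_integral_cmult_indicator)
  finally show ?thesis .
qed

lemma set_nn_integral_ge_const:
  assumes "A \<in> sets M" "\<And>x. x \<in> A \<Longrightarrow> l \<le> f x"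
  shows "l * emeasure M A \<le> (\<integral>\<^sup>+x\<in>A. f x \<partial>M)"
proof -
  have "l * emeasure M A = (\<integral>\<^sup>+x. l * indicator A x \<partial>M)"
    using assms(1) by (rule nn_integral_cmult_indicator[symmetric])
  also have "\<dots> \<le> (\<integral>\<^sup>+x\<in>A. f x \<partial>M)"
    by (intro nn_integral_mono) (auto simp: assms(2) split: split_indicator)
  finally show ?thesis .
qed

lemma ennreal_set_integral_eq_set_nn_integral:
  fixes f :: "'a \<Rightarrow> real"
  assumes [measurable]: "A \<in> sets M" "f \<in> borel_measurable M"
    and nonneg: "\<And>x. x \<in> A \<Longrightarrow> 0 \<le> f x" and finite: "(\<integral>\<^sup>+x\<in>A. ennreal (f x) \<partial>M) < \<infinity>"
  shows "ennreal (LINT x:A|M. f x) = (\<integral>\<^sup>+x\<in>A. ennreal (f x) \<partial>M)"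
proof -
  have norm_eq: "(\<integral>\<^sup>+x. ennreal (norm (indicator A x *\<^sub>R f x)) \<partial>M) = (\<integral>\<^sup>+x\<in>A. ennreal (f x) \<partial>M)"
    by (intro nn_integral_cong) (auto simp: nonneg split: split_indicator)
  have "integrable M (\<lambda>x. indicator A x *\<^sub>R f x)"
  proof (rule integrableI_bounded)
    show "(\<integral>\<^sup>+x. ennreal (norm (indicator A x *\<^sub>R f x)) \<partial>M) < \<infinity>"
      unfolding norm_eq by (rule finite)
  qed measurable
  then have "(\<integral>\<^sup>+x. ennreal (indicator A x *\<^sub>R f x) \<partial>M) = ennreal (LINT x:A|M. f x)"
    unfolding set_lebesgue_integral_def
    by (rule nn_integral_eq_integral) (auto simp: nonneg split: split_indicator)
  moreover have "(\<integral>\<^sup>+x. ennreal (indicator A x *\<^sub>R f x) \<partial>M) = (\<integral>\<^sup>+x\<in>A. ennreal (f x) \<partial>M)"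
    by (intro nn_integral_cong) (auto split: split_indicator)
  ultimately show ?thesis by simp
qed

lemma set_nn_integral_ball_le_const:
  fixes y :: "'a::euclidean_space"
  assumes "0 \<le> R" "\<And>x. x \<in> ball y R \<Longrightarrow> f x \<le> u"
  shows "(\<integral>\<^sup>+x\<in>ball y R. ennreal (f x) \<partial>lborel) \<le> ennreal (u * (unit_ball_vol DIM('a) * R ^ DIM('a)))"
proof -
  have "(\<integral>\<^sup>+x\<in>ball y R. ennreal (f x) \<partial>lborel) \<le> ennreal u * emeasure lborel (ball y R)"
    using assms(2) by (intro set_nn_integral_le_const) (auto intro: ennreal_leI)
  also have "\<dots> = ennreal (u * (unit_ball_vol DIM('a) * R ^ DIM('a)))"
    using assms(1) by (simp add: emeasure_ball ennreal_mult'')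
  finally show ?thesis .
qed

lemma measure_ball_diff_ball_ge:
  fixes y z :: "'a::euclidean_space"
  assumes "0 \<le> r" "0 \<le> R"
  shows "unit_ball_vol DIM('a) * (R ^ DIM('a) - r ^ DIM('a)) \<le> measure lborel (ball y R - ball z r)"
proof -
  define V where "V = unit_ball_vol DIM('a)"
  have "emeasure lborel (ball y R - ball z r) \<le> emeasure lborel (ball y R)" by (intro emeasure_mono) auto
  then have finite: "emeasure lborel (ball y R - ball z r) = ennreal (measure lborel (ball y R - ball z r))"
    using emeasure_lborel_ball_finite[of y R] by (intro emeasure_eq_ennreal_measure) (auto simp: top_unique)
  have "ennreal (V * R ^ DIM('a)) = emeasure lborel (ball y R)"
    using assms(2) by (simp add: emeasure_ball V_def)
  also have "\<dots> \<le> emeasure lborel ((ball y R - ball z r) \<union> ball z r)" by (intro emeasure_mono) auto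
  also have "\<dots> \<le> emeasure lborel (ball y R - ball z r) + emeasure lborel (ball z r)"
    by (rule emeasure_subadditive) auto
  also have "\<dots> = ennreal (measure lborel (ball y R - ball z r) + V * r ^ DIM('a))"
    using assms(1) by (simp add: finite emeasure_ball ennreal_plus V_def)
  finally show ?thesis
    using assms by (subst (asm) ennreal_le_iff) (auto simp: V_def algebra_simps)
qed

lemma norm_bounds_in_ball:
  fixes x y :: "'a::real_normed_vector"
  assumes "x \<in> ball y R"
  shows "norm y - R < norm x" "norm x < norm y + R"
  using assms norm_triangle_ineq2[of y x] norm_triangle_ineq2[of x y]
  by (auto simp: dist_norm norm_minus_commute)

lemma min_powr_le_powr_between:
  fixes s t u a :: real
  assumes "0 < s" "s \<le> t" "t \<le> u"
  shows "min (s powr a) (u powr a) \<le> t powr a"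
proof (cases "0 \<le> a")
  case True
  then have "s powr a \<le> t powr a" using assms by (intro powr_mono2) auto
  then show ?thesis by (simp add: min_le_iff_disj)
next
  case False
  then have "u powr a \<le> t powr a" using assms by (intro powr_mono2') auto
  then show ?thesis by (simp add: min_le_iff_disj)
qed

lemma powr_two_div_of_power_mult_powr:
  fixes R M b :: real
  assumes "0 < R" "0 < M" "0 < n"
  shows "(R ^ n * M powr (b * real n / 2)) powr (2 / real n) = R\<^sup>2 * M powr b"
proof -
  have "(R ^ n) powr (2 / real n) = R powr (real n * (2 / real n))"
    using assms(1) by (simp add: powr_realpow[symmetric] powr_powr del: powr_realpow)
  also have "\<dots> = R\<^sup>2" using assms(1,3) by (simp add: powr_numeral)
  finally have "(R ^ n) powr (2 / real n) = R\<^sup>2" .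
  moreover have "(M powr (b * real n / 2)) powr (2 / real n) = M powr b"
    using assms(3) by (simp add: powr_powr)
  ultimately show ?thesis using assms(1,2) by (simp add: powr_mult)
qed

lemma neg_dim_less_weight_exponents:
  fixes n \<gamma> \<beta> :: real
  assumes "3 \<le> n" "\<gamma> < n" "\<gamma> - 2 < \<beta>" "\<beta> \<le> (n - 2) / n * \<gamma>"
  shows "- n < - \<gamma>" "- n < - \<beta>" "- n < (\<beta> - \<gamma>) * n / 2"
proof -
  have "(n - 2) / n * \<gamma> \<le> max 0 \<gamma>"
  proof (cases "0 \<le> \<gamma>")
    case True
    have "(n - 2) / n \<le> 1" using assms(1) by simp
    from mult_right_mono[OF this True] show ?thesis by simp
  next
    case False
    have "0 \<le> (n - 2) / n" using assms(1) by simp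
    from mult_nonneg_nonpos[OF this] False show ?thesis by simp
  qed
  then show "- n < - \<beta>" using assms(1,2,4) by linarith
  show "- n < - \<gamma>" using assms(2) by simp
  have "0 < (\<beta> - \<gamma> + 2) * n / 2" using assms(1,3) by simp
  moreover have "(\<beta> - \<gamma> + 2) * n / 2 = (\<beta> - \<gamma>) * n / 2 + n" by (simp add: field_simps)
  ultimately show "- n < (\<beta> - \<gamma>) * n / 2" by linarith
qed

lemma dyadic_scale_index:
  fixes r t :: real
  assumes "0 < t" "t < r"
  obtains k :: nat where "r / 2 ^ Suc k \<le> t" "t < r / 2 ^ k"
proof -
  obtain n :: nat where "r / t < 2 ^ n" using real_arch_pow[of 2 "r / t"] by auto
  then have "r / 2 ^ n \<le> t" using assms(1) by (simp add: divide_less_eq mult.commute less_imp_le)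
  moreover have "\<not> r / 2 ^ 0 \<le> t" using assms(2) by simp
  ultimately obtain k where "\<forall>i\<le>k. \<not> r / 2 ^ i \<le> t" "r / 2 ^ (k + 1) \<le> t"
    using ex_least_nat_less[of "\<lambda>k. r / 2 ^ k \<le> t" n] by auto
  then show ?thesis using that by auto
qed

lemma norm_powr_le_dyadic_ball_sum:
  fixes x :: "'a::real_normed_vector"
  assumes "a \<le> 0" "0 < r"
  shows "ennreal (norm x powr a) * indicator (ball 0 r) x
           \<le> (\<Sum>k. ennreal ((r / 2 ^ Suc k) powr a) * indicator (ball 0 (r / 2 ^ k)) x)"
    (is "_ \<le> (\<Sum>k. ?f k)")
proof (cases "x \<in> ball 0 r \<and> x \<noteq> 0")
  case True
  then obtain k where k: "r / 2 ^ Suc k \<le> norm x" "norm x < r / 2 ^ k"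
    using dyadic_scale_index[of "norm x" r] by auto
  have "norm x powr a \<le> (r / 2 ^ Suc k) powr a" using k(1) assms by (intro powr_mono2') auto
  then have "ennreal (norm x powr a) * indicator (ball 0 r) x \<le> ?f k"
    using True k(2) by (auto intro: ennreal_leI)
  also have "\<dots> \<le> (\<Sum>k. ?f k)" by (rule ennreal_le_suminf)
  finally show ?thesis .
next
  case False
  then have "ennreal (norm x powr a) * indicator (ball 0 r) x = 0" by (auto split: split_indicator)
  then show ?thesis by (simp only: zero_le)
qed

lemma nn_integral_norm_powr_ball_zero_le:
  fixes a :: real
  assumes a: "- real DIM('a) < a" "a < 0"
  shows "\<exists>K>0. \<forall>r>0. (\<integral>\<^sup>+x\<in>ball (0::'a::euclidean_space) r. ennreal (norm x powr a) \<partial>lborel)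
           \<le> ennreal (K * r ^ DIM('a) * r powr a)"
proof -
  define N where "N = DIM('a)"
  define V where "V = unit_ball_vol (real N)"
  define q where "q = 2 powr (- a) / 2 ^ N"
  have "2 powr (- a) < 2 powr real N" using a(1) by (intro powr_less_mono) (auto simp: N_def)
  then have q: "0 < q" "q < 1" by (auto simp: q_def powr_realpow)
  have V: "V > 0" by (simp add: V_def)
  show ?thesis
  proof (intro exI[of _ "V * 2 powr (- a) / (1 - q)"] conjI allI impI)
    show "V * 2 powr (- a) / (1 - q) > 0" using q V by simp
    fix r :: real assume r: "r > 0"
    define w where "w k = (r / 2 ^ Suc k) powr a" for k :: nat
    have shell: "(\<integral>\<^sup>+x. ennreal (w k) * indicator (ball (0::'a) (r / 2 ^ k)) x \<partial>lborel)
        = ennreal (V * 2 powr (- a) * r ^ N * r powr a * q ^ k)" for k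
    proof -
      have "(2 ^ Suc k :: real) powr a = (2 powr a) ^ Suc k"
        by (simp add: powr_realpow[symmetric] powr_powr powr_power powr_mult mult.commute)
      then have "w k = r powr a * (2 powr (- a)) ^ Suc k"
        unfolding w_def powr_divide by (simp add: powr_minus power_inverse divide_inverse)
      then have term_eq: "w k * (V * (r / 2 ^ k) ^ N) = V * 2 powr (- a) * r ^ N * r powr a * q ^ k"
        by (simp add: q_def power_divide power_mult_distrib field_simps flip: power_mult)
      have "(\<integral>\<^sup>+x. ennreal (w k) * indicator (ball (0::'a) (r / 2 ^ k)) x \<partial>lborel)
          = ennreal (w k) * ennreal (V * (r / 2 ^ k) ^ N)"
        using r by (simp add: nn_integral_cmult_indicator emeasure_ball V_def N_def)
      also have "\<dots> = ennreal (w k * (V * (r / 2 ^ k) ^ N))"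
        using V r by (simp add: ennreal_mult'')
      finally show ?thesis unfolding term_eq .
    qed
    have "(\<integral>\<^sup>+x\<in>ball (0::'a) r. ennreal (norm x powr a) \<partial>lborel)
        \<le> (\<integral>\<^sup>+x. (\<Sum>k. ennreal (w k) * indicator (ball (0::'a) (r / 2 ^ k)) x) \<partial>lborel)"
      unfolding w_def using a(2) r by (intro nn_integral_mono norm_powr_le_dyadic_ball_sum) simp_all
    also have "\<dots> = (\<Sum>k. \<integral>\<^sup>+x. ennreal (w k) * indicator (ball (0::'a) (r / 2 ^ k)) x \<partial>lborel)"
      by (intro nn_integral_suminf) (auto intro!: borel_measurable_times_ennreal borel_measurable_indicator)
    also have "\<dots> = ennreal (\<Sum>k. V * 2 powr (- a) * r ^ N * r powr a * q ^ k)"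
      unfolding shell using q r V by (intro suminf_ennreal2) (auto intro!: summable_mult summable_geometric)
    also have "(\<Sum>k. V * 2 powr (- a) * r ^ N * r powr a * q ^ k) = V * 2 powr (- a) / (1 - q) * r ^ N * r powr a"
      using q by (simp add: suminf_mult suminf_geometric summable_geometric)
    finally show "(\<integral>\<^sup>+x\<in>ball (0::'a) r. ennreal (norm x powr a) \<partial>lborel)
        \<le> ennreal (V * 2 powr (- a) / (1 - q) * r ^ DIM('a) * r powr a)"
      by (simp add: N_def)
  qed
qed

lemma norm_powr_ge_on_ball_outside_ball:
  fixes x y :: "'a::real_normed_vector"
  assumes "x \<in> ball y R" "x \<notin> ball 0 (R/4)" "0 < R"
  shows "min ((1/8) powr a) (2 powr a) * max R (norm y) powr a \<le> norm x powr a"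
proof -
  define M where "M = max R (norm y)"
  have M: "M > 0" using assms(3) by (simp add: M_def)
  have "R/4 \<le> norm x" "norm y - R < norm x" "norm x < norm y + R"
    using assms(1,2) norm_bounds_in_ball[of x y R] by auto
  then have "M/8 \<le> norm x" "norm x \<le> 2 * M" unfolding M_def by auto
  then have "min ((M/8) powr a) ((2 * M) powr a) \<le> norm x powr a"
    using M by (intro min_powr_le_powr_between) auto
  moreover have "(M/8) powr a = (1/8) powr a * M powr a" "(2 * M) powr a = 2 powr a * M powr a"
    using M by (simp_all add: powr_divide powr_mult)
  ultimately show ?thesis unfolding M_def by (simp add: min_mult_distrib_right)
qed

lemma nn_integral_norm_powr_ball_ge:
  fixes a :: real
  shows "\<exists>c>0. \<forall>(y::'a::euclidean_space) R. R > 0 \<longrightarrow>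
           ennreal (c * (R ^ DIM('a) * max R (norm y) powr a))
             \<le> (\<integral>\<^sup>+x\<in>ball y R. ennreal (norm x powr a) \<partial>lborel)"
proof -
  define N where "N = DIM('a)"
  define v where "v = unit_ball_vol N * (1 - (1/4) ^ N)"
  define m where "m = min ((1/8) powr a) (2 powr a)"
  have "(1/4 :: real) ^ N < 1" by (simp add: power_less_one_iff N_def)
  then have v: "0 < v" by (simp add: v_def)
  show ?thesis
  proof (intro exI[of _ "v * m"] conjI allI impI)
    show "0 < v * m" using v by (simp add: m_def)
    fix y :: 'a and R :: real assume R: "R > 0"
    define M where "M = max R (norm y)"
    have M: "M > 0" using R by (simp add: M_def)
    define D where "D = ball y R - ball 0 (R/4)"
    have "v * R ^ N \<le> measure lborel D"
      using measure_ball_diff_ball_ge[of "R/4" R y 0] R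
      by (simp add: D_def v_def N_def power_divide field_simps)
    moreover have "emeasure lborel D = ennreal (measure lborel D)"
      using emeasure_mono[of D "ball y R" lborel] emeasure_lborel_ball_finite[of y R]
      by (intro emeasure_eq_ennreal_measure) (auto simp: D_def top_unique)
    ultimately have "ennreal (v * m * (R ^ N * M powr a)) \<le> ennreal (m * M powr a) * emeasure lborel D"
      using v R M by (simp add: m_def ennreal_mult'[symmetric] mult_left_mono mult_ac)
    also have "\<dots> \<le> (\<integral>\<^sup>+x\<in>D. ennreal (norm x powr a) \<partial>lborel)"
      using R by (intro set_nn_integral_ge_const ennreal_leI)
        (auto simp: D_def m_def M_def norm_powr_ge_on_ball_outside_ball)
    also have "\<dots> \<le> (\<integral>\<^sup>+x\<in>ball y R. ennreal (norm x powr a) \<partial>lborel)"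
      by (rule nn_set_integral_set_mono) (auto simp: D_def)
    finally show "ennreal (v * m * (R ^ DIM('a) * max R (norm y) powr a))
        \<le> (\<integral>\<^sup>+x\<in>ball y R. ennreal (norm x powr a) \<partial>lborel)"
      by (simp add: M_def N_def)
  qed
qed

lemma nn_integral_norm_powr_ball_le_nonneg_exponent:
  fixes a :: real and y :: "'a::euclidean_space"
  assumes "0 \<le> a" "0 < R"
  shows "(\<integral>\<^sup>+x\<in>ball y R. ennreal (norm x powr a) \<partial>lborel)
           \<le> ennreal (2 powr a * unit_ball_vol DIM('a) * (R ^ DIM('a) * max R (norm y) powr a))"
proof -
  have "norm x powr a \<le> 2 powr a * max R (norm y) powr a" if "x \<in> ball y R" for x
  proof -
    have "norm x \<le> 2 * max R (norm y)" using norm_bounds_in_ball[OF that] by auto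
    then have "norm x powr a \<le> (2 * max R (norm y)) powr a" using assms(1) by (intro powr_mono2) auto
    then show ?thesis using assms(2) by (simp add: powr_mult)
  qed
  from set_nn_integral_ball_le_const[where f = "\<lambda>x. norm x powr a" and y = y and R = R, OF _ this]
  show ?thesis using assms(2) by (simp add: mult_ac)
qed

lemma nn_integral_norm_powr_ball_le_far:
  fixes a :: real and y :: "'a::euclidean_space"
  assumes "a \<le> 0" "0 < R" "2 * R \<le> norm y"
  shows "(\<integral>\<^sup>+x\<in>ball y R. ennreal (norm x powr a) \<partial>lborel)
           \<le> ennreal (2 powr (- a) * unit_ball_vol DIM('a) * (R ^ DIM('a) * max R (norm y) powr a))"
proof -
  have "norm x powr a \<le> 2 powr (- a) * max R (norm y) powr a" if "x \<in> ball y R" for x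
  proof -
    have "max R (norm y) / 2 \<le> norm x" using norm_bounds_in_ball[OF that] assms(3) by auto
    then have "norm x powr a \<le> (max R (norm y) / 2) powr a" using assms(1,2) by (intro powr_mono2') auto
    moreover have "(max R (norm y) / 2) powr a = 2 powr (- a) * max R (norm y) powr a"
      using assms(2) by (simp add: powr_divide powr_minus_divide)
    ultimately show ?thesis by simp
  qed
  from set_nn_integral_ball_le_const[where f = "\<lambda>x. norm x powr a" and y = y and R = R, OF _ this]
  show ?thesis using assms(2) by (simp add: mult_ac)
qed

lemma nn_integral_norm_powr_ball_le_neg_exponent:
  fixes a :: real
  assumes a: "- real DIM('a) < a" "a < 0"
  shows "\<exists>C>0. \<forall>(y::'a::euclidean_space) R. R > 0 \<longrightarrow>
           (\<integral>\<^sup>+x\<in>ball y R. ennreal (norm x powr a) \<partial>lborel)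
             \<le> ennreal (C * (R ^ DIM('a) * max R (norm y) powr a))"
proof -
  define N where "N = DIM('a)"
  obtain K where K: "K > 0" "\<And>r. r > 0 \<Longrightarrow>
      (\<integral>\<^sup>+x\<in>ball (0::'a) r. ennreal (norm x powr a) \<partial>lborel) \<le> ennreal (K * r ^ N * r powr a)"
    using nn_integral_norm_powr_ball_zero_le[OF a] unfolding N_def by auto
  define C where "C = 2 powr (- a) * unit_ball_vol N + K * 3 ^ N"
  have far_le_C: "2 powr (- a) * unit_ball_vol N \<le> C" and near_le_C: "K * 3 ^ N \<le> C" and C: "0 < C"
    using K(1) by (simp_all add: C_def add_pos_pos)
  show ?thesis
  proof (intro exI[of _ C] conjI allI impI)
    show "0 < C" by (rule C)
    fix y :: 'a and R :: real assume R: "R > 0"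
    define M where "M = max R (norm y)"
    have M: "M > 0" using R by (simp add: M_def)
    have "(\<integral>\<^sup>+x\<in>ball y R. ennreal (norm x powr a) \<partial>lborel) \<le> ennreal (C * (R ^ N * M powr a))"
    proof (cases "2 * R \<le> norm y")
      case True
      then have "(\<integral>\<^sup>+x\<in>ball y R. ennreal (norm x powr a) \<partial>lborel)
          \<le> ennreal (2 powr (- a) * unit_ball_vol N * (R ^ N * M powr a))"
        using nn_integral_norm_powr_ball_le_far[of a R y] a(2) R by (simp add: M_def N_def)
      also have "\<dots> \<le> ennreal (C * (R ^ N * M powr a))"
        using far_le_C R M by (intro ennreal_leI mult_right_mono) auto
      finally show ?thesis .
    next
      case False
      have "(\<integral>\<^sup>+x\<in>ball y R. ennreal (norm x powr a) \<partial>lborel)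
          \<le> (\<integral>\<^sup>+x\<in>ball (0::'a) (3 * R). ennreal (norm x powr a) \<partial>lborel)"
        using False by (intro nn_set_integral_set_mono) (auto dest: norm_bounds_in_ball)
      also have "\<dots> \<le> ennreal (K * 3 ^ N * (R ^ N * (3 * R) powr a))"
        using K(2)[of "3 * R"] R by (simp add: power_mult_distrib mult_ac)
      also have "\<dots> \<le> ennreal (C * (R ^ N * M powr a))"
      proof (rule ennreal_leI, rule mult_mono)
        have "(3 * R) powr a \<le> M powr a" using False a(2) M by (intro powr_mono2') (auto simp: M_def)
        then show "R ^ N * (3 * R) powr a \<le> R ^ N * M powr a" using R by simp
      qed (use near_le_C K(1) C R in auto)
      finally show ?thesis .
    qed
    then show "(\<integral>\<^sup>+x\<in>ball y R. ennreal (norm x powr a) \<partial>lborel)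
        \<le> ennreal (C * (R ^ DIM('a) * max R (norm y) powr a))"
      by (simp add: M_def N_def)
  qed
qed

lemma nn_integral_norm_powr_ball_le:
  fixes a :: real
  assumes "- real DIM('a) < a"
  shows "\<exists>C>0. \<forall>(y::'a::euclidean_space) R. R > 0 \<longrightarrow>
           (\<integral>\<^sup>+x\<in>ball y R. ennreal (norm x powr a) \<partial>lborel)
             \<le> ennreal (C * (R ^ DIM('a) * max R (norm y) powr a))"
proof (cases "0 \<le> a")
  case True
  then show ?thesis
    using nn_integral_norm_powr_ball_le_nonneg_exponent[OF True]
    by (intro exI[of _ "2 powr a * unit_ball_vol DIM('a)"]) auto
next
  case False
  then show ?thesis using nn_integral_norm_powr_ball_le_neg_exponent[OF assms] by simp
qed

lemma set_integral_norm_powr_ball_comparable: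
  fixes a :: real
  assumes "- real DIM('a) < a"
  shows "comparable_on (UNIV \<times> {0<..})
           (\<lambda>(y::'a::euclidean_space, R). LINT x:ball y R|lborel. norm x powr a)
           (\<lambda>(y, R). R ^ DIM('a) * max R (norm y) powr a)"
proof -
  obtain c where c: "c > 0" "\<And>(y::'a) R. R > 0 \<Longrightarrow> ennreal (c * (R ^ DIM('a) * max R (norm y) powr a))
      \<le> (\<integral>\<^sup>+x\<in>ball y R. ennreal (norm x powr a) \<partial>lborel)"
    using nn_integral_norm_powr_ball_ge by blast
  obtain C where C: "C > 0" "\<And>(y::'a) R. R > 0 \<Longrightarrow> (\<integral>\<^sup>+x\<in>ball y R. ennreal (norm x powr a) \<partial>lborel)
      \<le> ennreal (C * (R ^ DIM('a) * max R (norm y) powr a))"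
    using nn_integral_norm_powr_ball_le[OF assms] by blast
  have integral_eq: "ennreal (LINT x:ball y R|lborel. norm x powr a)
      = (\<integral>\<^sup>+x\<in>ball y R. ennreal (norm x powr a) \<partial>lborel)" if "R > 0" for y :: 'a and R
    using C(2)[OF that, of y] le_less_trans[OF _ ennreal_less_top]
    by (intro ennreal_set_integral_eq_set_nn_integral) auto
  have integral_nonneg: "0 \<le> (LINT x:ball y R|lborel. norm x powr a)" for y :: 'a and R
    unfolding set_lebesgue_integral_def by (auto intro!: integral_nonneg simp: indicator_def)
  have "c * (R ^ DIM('a) * max R (norm y) powr a) \<le> (LINT x:ball y R|lborel. norm x powr a)
      \<and> (LINT x:ball y R|lborel. norm x powr a) \<le> C * (R ^ DIM('a) * max R (norm y) powr a)"
    if "R > 0" for y :: 'a and R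
    using c(2)[OF that, of y] C(2)[OF that, of y] integral_nonneg[of y R] C(1) that
    by (simp flip: integral_eq[OF that])
  then show ?thesis by (intro comparable_onI[OF c(1) C(1)]) auto
qed

theorem lemma5p2:
  fixes \<gamma> \<beta> :: real
  assumes "CARD('n::finite) \<ge> 3"
    and "\<gamma> < real CARD('n)"
    and "\<gamma> - 2 < \<beta>"
    and "\<beta> \<le> (real CARD('n) - 2) / real CARD('n) * \<gamma>"
  shows "\<exists>\<kappa>16 > 0. \<exists>\<kappa>18 > 0. \<forall>(y :: real ^ 'n) R. R > 0 \<longrightarrow>
     (rho_w \<gamma> \<beta> y R / \<kappa>16 \<le> R\<^sup>2 * mu_w \<gamma> (ball y R) / mu_w \<beta> (ball y R)
      \<and> R\<^sup>2 * mu_w \<gamma> (ball y R) / mu_w \<beta> (ball y R) \<le> \<kappa>16 * rho_w \<gamma> \<beta> y R)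
   \<and> (R\<^sup>2 * (max R (norm y)) powr (\<beta> - \<gamma>) / \<kappa>18 \<le> rho_w \<gamma> \<beta> y R
      \<and> rho_w \<gamma> \<beta> y R \<le> \<kappa>18 * R\<^sup>2 * (max R (norm y)) powr (\<beta> - \<gamma>))"
proof -
  define n where "n = real CARD('n)"
  have n: "3 \<le> n" using assms(1) by (simp add: n_def)
  have exponents: "- n < - \<gamma>" "- n < - \<beta>" "- n < (\<beta> - \<gamma>) * n / 2"
    using neg_dim_less_weight_exponents[OF n assms(2-4)[folded n_def]] by auto
  have weight: "comparable_on (UNIV \<times> {0<..}) (\<lambda>(y :: real ^ 'n, R). LINT x:ball y R|lborel. norm x powr a)
      (\<lambda>(y, R). R ^ CARD('n) * max R (norm y) powr a)" if "- n < a" for a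
    using set_integral_norm_powr_ball_comparable[where 'a = "real ^ 'n", of a] that by (simp add: n_def)
  have ratio: "comparable_on (UNIV \<times> {0<..})
      (\<lambda>(y :: real ^ 'n, R). R\<^sup>2 * mu_w \<gamma> (ball y R) / mu_w \<beta> (ball y R))
      (\<lambda>(y, R). R\<^sup>2 * max R (norm y) powr (\<beta> - \<gamma>))"
    using exponents
    by (intro comparable_on_cong[OF comparable_on_mult[OF comparable_on_refl[of _ "\<lambda>(y :: real ^ 'n, R). R\<^sup>2"]
          comparable_on_divide[OF weight[of "- \<gamma>"] weight[of "- \<beta>"]]]])
      (auto simp: mu_w_def n_def powr_diff powr_minus_divide)
  have rho: "comparable_on (UNIV \<times> {0<..})
      (\<lambda>(y :: real ^ 'n, R). rho_w \<gamma> \<beta> y R) (\<lambda>(y, R). R\<^sup>2 * max R (norm y) powr (\<beta> - \<gamma>))"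
    using exponents n
    by (intro comparable_on_cong[OF comparable_on_powr[OF weight[of "(\<beta> - \<gamma>) * n / 2"], of "2 / n"]])
      (auto simp: rho_w_def n_def powr_two_div_of_power_mult_powr)
  have "\<exists>\<kappa>>0. \<forall>(y :: real ^ 'n) R. R > 0 \<longrightarrow> rho_w \<gamma> \<beta> y R / \<kappa> \<le> R\<^sup>2 * mu_w \<gamma> (ball y R) / mu_w \<beta> (ball y R)
      \<and> R\<^sup>2 * mu_w \<gamma> (ball y R) / mu_w \<beta> (ball y R) \<le> \<kappa> * rho_w \<gamma> \<beta> y R"
    by (rule comparable_on_pairs_symmetric_constant[OF comparable_on_trans[OF rho comparable_on_sym[OF ratio]]])
      (simp add: rho_w_def)
  moreover have "\<exists>\<kappa>>0. \<forall>(y :: real ^ 'n) R. R > 0 \<longrightarrow> R\<^sup>2 * max R (norm y) powr (\<beta> - \<gamma>) / \<kappa> \<le> rho_w \<gamma> \<beta> y R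
      \<and> rho_w \<gamma> \<beta> y R \<le> \<kappa> * (R\<^sup>2 * max R (norm y) powr (\<beta> - \<gamma>))"
    by (rule comparable_on_pairs_symmetric_constant[OF comparable_on_sym[OF rho]]) simp
  ultimately show ?thesis unfolding mult.assoc by blast
qed

end
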